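(* Let $n\ge2$, $\lambda>0$, and $\rho=(\rho_1,\dots,\rho_n)^\top\in(0,1)^n$ with $\sum_{j=1}^n\rho_j=1$. Let $\mathbf{A}=\rho\otimes(1,\dots,1)-\mathbf{I}\in\mathbb{R}^{n\times n}$ and consider $\frac{\mathrm{d}}{\mathrm{d}t}f=2\lambda\mathbf{A}f$, $f(0)=f^I\in\mathbb{R}^n$, with steady state $f^\infty=\rho$. Let $\psi\in C^2(J)$ be a convex entropy generator such that, for some $\mu>0$ and all $u=(u_1,\dots,u_n)^\top\in[0,1]^n$ with $\sum_j u_j=1$, $$\sum_{j=1}^n\psi''\Big(\frac{u_j}{\rho_j}\Big)\frac{1}{\rho_j}(\rho_j-u_j)^2\ \ge\ \frac{\mu}{2\lambda}\sum_{j=1}^n\psi'\Big(\frac{u_j}{\rho_j}\Big)(u_j-\rho_j).$$ Then for all non-negative normalized initial data $f^I$ (i.e. $f^I_j\ge0$, $\sum_jf^I_j=1$) the solution satisfies $$I_\psi(f(t)|f^\infty)\le e^{-(2\lambda+\mu)t}I_\psi(f^I|f^\infty),\qquad e_\psi(f(t)|f^\infty)\le e^{-(2\lambda+\mu)t}e_\psi(f^I|f^\infty),\qquad t\ge0.$$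
   Context: $J$ is $\mathbb{R}^+$ or $\mathbb{R}$. An entropy generator is a function $\psi\in C(\bar J)\cap C^2(J)$ with $\psi(1)=0$, $\psi\ge0$, $\psi''\ge0$ on $J$. The relative entropy is $e_\psi(f|f^\infty)=\sum_{j=1}^n\psi(f_j/f^\infty_j)f^\infty_j$ and the Fisher information is $I_\psi(f|f^\infty)=\sum_{j=1}^n\psi'(f_j/f^\infty_j)\,2\lambda\,(f_j-f^\infty_j)$ (so that $\frac{\mathrm{d}}{\mathrm{d}t}e_\psi(f(t)|f^\infty)=-I_\psi(f(t)|f^\infty)$). *)

theory Defs
  imports "HOL-Analysis.Analysis"
begin

definition rel_entropy :: "(real \<Rightarrow> real) \<Rightarrow> real^'n \<Rightarrow> real^'n \<Rightarrow> real" where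
  "rel_entropy psi f finf = (\<Sum>j\<in>UNIV. psi (f$j / finf$j) * finf$j)"

definition fisher_info :: "(real \<Rightarrow> real) \<Rightarrow> real \<Rightarrow> real^'n \<Rightarrow> real^'n \<Rightarrow> real" where
  "fisher_info psi lam f finf = (\<Sum>j\<in>UNIV. deriv psi (f$j / finf$j) * (2 * lam) * (f$j - finf$j))"

definition matA :: "real^'n \<Rightarrow> real^'n^'n" where
  "matA rho = (\<chi> i j. rho$i - (if i = j then 1 else 0))"

end

theory Submission
  imports Defs
begin

text \<open>
  The solution is f(t) = \<rho> + s (fI - \<rho>) with s = exp (-2 \<lambda> t), so entropy and Fisher
  information are functions of s \<in> (0,1] along the segment from \<rho> to fI. Write E(s) for the
  entropy and F = E' for its slope; then I(f(t)) = 2 \<lambda> s F(s), and the hypothesis on \<psi>,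
  applied at the point of the segment, reads s F'(s) \<ge> a F(s) with a = \<mu> / (2 \<lambda>). Hence
  s F(s) / s^(1 + a) is nondecreasing; so is E(s) / s^(1 + a), because s F(s) - (1 + a) E(s)
  vanishes at s = 0 and has derivative s F' - a F \<ge> 0. Comparing s with 1 gives the factor
  s^(1 + a) = exp (-(2 \<lambda> + \<mu>) t).
\<close>

lemma matA_mult_vec: "matA rho *v v = (\<Sum>j\<in>UNIV. v$j) *\<^sub>R rho - v"
proof (rule vec_eq_iff[THEN iffD2], intro allI)
  fix i
  have "(matA rho *v v) $ i = (\<Sum>j\<in>UNIV. (rho$i - (if i = j then 1 else 0)) * v$j)"
    by (simp add: matA_def matrix_vector_mult_def)
  also have "\<dots> = (\<Sum>j\<in>UNIV. rho$i * v$j) - (\<Sum>j\<in>UNIV. if i = j then v$j else 0)"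
    by (subst sum_subtractf[symmetric], rule sum.cong) (auto simp: left_diff_distrib)
  finally show "(matA rho *v v) $ i = ((\<Sum>j\<in>UNIV. v$j) *\<^sub>R rho - v) $ i"
    by (simp add: sum_distrib_left[symmetric] mult.commute)
qed

lemma matA_ode_mass_conserved:
  fixes rho :: "real^'n" and f :: "real \<Rightarrow> real^'n"
  assumes rho_sum: "(\<Sum>j\<in>UNIV. rho$j) = 1"
    and f_ode: "\<forall>t\<ge>0. (f has_vector_derivative ((2 * lam) *\<^sub>R (matA rho *v f t))) (at t within {0..})"
    and "t \<ge> 0"
  shows "(\<Sum>j\<in>UNIV. f t $ j) = (\<Sum>j\<in>UNIV. f 0 $ j)"
proof -
  let ?mass = "\<lambda>v::real^'n. \<Sum>j\<in>UNIV. v$j"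
  have mass_linear: "bounded_linear ?mass"
    by (intro bounded_linear_sum bounded_linear_vec_nth)
  have mass_A: "?mass (matA rho *v v) = 0" for v
    by (simp add: matA_mult_vec sum_subtractf sum_distrib_left[symmetric] rho_sum)
  have "((\<lambda>t. ?mass (f t)) has_vector_derivative 0) (at t within {0..})" if "t \<ge> 0" for t
    using bounded_linear.has_vector_derivative[OF mass_linear f_ode[rule_format, OF that]]
    by (simp add: sum_distrib_left[symmetric] mass_A)
  then obtain c where "\<And>t. t \<in> {0..} \<Longrightarrow> ?mass (f t) = c"
    by (rule has_vector_derivative_zero_constant[OF convex_real_interval(1)]) auto
  then show ?thesis using \<open>t \<ge> 0\<close> by simp
qed

lemma matA_ode_solution:
  fixes rho :: "real^'n" and f :: "real \<Rightarrow> real^'n"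
  assumes rho_sum: "(\<Sum>j\<in>UNIV. rho$j) = 1"
    and mass: "(\<Sum>j\<in>UNIV. f 0 $ j) = 1"
    and f_ode: "\<forall>t\<ge>0. (f has_vector_derivative ((2 * lam) *\<^sub>R (matA rho *v f t))) (at t within {0..})"
    and "t \<ge> 0"
  shows "f t = rho + exp (-(2 * lam) * t) *\<^sub>R (f 0 - rho)"
proof -
  let ?w = "\<lambda>t. exp (2 * lam * t) *\<^sub>R (f t - rho)"
  have "(?w has_vector_derivative 0) (at t within {0..})" if "t \<ge> 0" for t
  proof -
    have "matA rho *v f t = rho - f t"
      using matA_ode_mass_conserved[OF rho_sum f_ode that] by (simp add: matA_mult_vec mass)
    then show ?thesis
      using f_ode that
      by (auto intro!: derivative_eq_intros simp: algebra_simps) (metis scaleR_right_distrib)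
  qed
  then obtain c where "\<And>t. t \<in> {0..} \<Longrightarrow> ?w t = c"
    by (rule has_vector_derivative_zero_constant[OF convex_real_interval(1)]) auto
  then have "?w t = f 0 - rho"
    using \<open>t \<ge> 0\<close> by (metis atLeast_iff order_refl exp_zero mult_zero_right scaleR_one)
  moreover have "f t - rho = exp (-(2 * lam) * t) *\<^sub>R ?w t"
    by (simp add: exp_add[symmetric])
  ultimately have "f t - rho = exp (-(2 * lam) * t) *\<^sub>R (f 0 - rho)"
    by simp
  then show ?thesis
    by (metis add.commute diff_add_cancel)
qed

lemma powr_growth_bound:
  fixes g g' :: "real \<Rightarrow> real" and k s :: real
  assumes s: "0 < s" "s \<le> 1"
    and cont: "continuous_on {s..1} g"
    and deriv: "\<And>r. s < r \<Longrightarrow> r < 1 \<Longrightarrow> (g has_real_derivative g' r) (at r)"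
    and growth: "\<And>r. s < r \<Longrightarrow> r < 1 \<Longrightarrow> k * g r \<le> r * g' r"
  shows "g s \<le> s powr k * g 1"
proof -
  have "(\<lambda>r. g r * r powr (-k)) s \<le> (\<lambda>r. g r * r powr (-k)) 1"
  proof (rule DERIV_nonneg_imp_increasing_open[OF \<open>s \<le> 1\<close>])
    fix r assume r: "s < r" "r < 1"
    then have "r > 0" using s by simp
    have "((\<lambda>r. g r * r powr (-k)) has_real_derivative
        g' r * r powr (-k) + g r * (-k * r powr (-k - 1))) (at r)"
      using deriv[OF r] \<open>r > 0\<close> by (auto intro!: derivative_eq_intros)
    moreover have "g' r * r powr (-k) + g r * (-k * r powr (-k - 1))
        = r powr (-k - 1) * (r * g' r - k * g r)"
      using \<open>r > 0\<close> by (simp add: powr_diff field_simps)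
    moreover have "r powr (-k - 1) * (r * g' r - k * g r) \<ge> 0"
      using growth[OF r] by simp
    ultimately show "\<exists>y. ((\<lambda>r. g r * r powr (-k)) has_real_derivative y) (at r) \<and> y \<ge> 0"
      by metis
  next
    show "continuous_on {s..1} (\<lambda>r. g r * r powr (-k))"
      using s by (intro continuous_intros cont) auto
  qed
  then have "g s * s powr (-k) * s powr k \<le> g 1 * s powr k"
    by (simp add: mult_right_mono)
  moreover have "g s * s powr (-k) * s powr k = g s"
    using s by (simp add: mult.assoc powr_add[symmetric])
  ultimately show ?thesis
    by (metis mult.commute)
qed

locale relaxation_path =
  fixes psi :: "real \<Rightarrow> real" and J :: "real set" and rho g :: "real^'n"
  assumes J: "J = {0<..} \<or> J = UNIV"
    and psi_cont: "continuous_on (closure J) psi"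
    and psi_d1: "\<forall>x\<in>J. (psi has_real_derivative deriv psi x) (at x)"
    and psi_d2: "\<forall>x\<in>J. (deriv psi has_real_derivative deriv (deriv psi) x) (at x)"
    and psi_one: "psi 1 = 0"
    and rho_pos: "\<forall>j. 0 < rho$j"
    and g_nonneg: "\<forall>j. 0 \<le> g$j"
begin

lemma rho_nonzero [simp]: "rho$j \<noteq> 0"
  using rho_pos by (metis less_irrefl)

definition relaxed :: "real \<Rightarrow> real^'n" where
  "relaxed r = rho + r *\<^sub>R (g - rho)"

definition entropy :: "real \<Rightarrow> real" where
  "entropy r = rel_entropy psi (relaxed r) rho"

definition entropy_slope :: "real \<Rightarrow> real" where
  "entropy_slope r = (\<Sum>j\<in>UNIV. deriv psi (relaxed r $ j / rho$j) * (g$j - rho$j))"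

definition entropy_curvature :: "real \<Rightarrow> real" where
  "entropy_curvature r =
     (\<Sum>j\<in>UNIV. deriv (deriv psi) (relaxed r $ j / rho$j) * (g$j - rho$j)^2 / rho$j)"

lemma relaxed_one: "relaxed 1 = g"
  by (simp add: relaxed_def)

lemma relaxed_ratio: "relaxed r $ j / rho$j = (1 - r) + r * (g$j / rho$j)"
  by (simp add: relaxed_def field_simps)

lemma relaxed_ratio_in_J:
  assumes "0 \<le> r" "r < 1"
  shows "relaxed r $ j / rho$j \<in> J"
proof -
  have "0 \<le> g$j / rho$j" using rho_pos g_nonneg by (simp add: less_imp_le)
  then have "relaxed r $ j / rho$j > 0"
    unfolding relaxed_ratio using assms by (smt (verit) mult_nonneg_nonneg)
  then show ?thesis using J by auto
qed

lemma relaxed_ratio_in_closure: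
  assumes "0 \<le> r" "r \<le> 1"
  shows "relaxed r $ j / rho$j \<in> closure J"
proof -
  have "0 \<le> g$j / rho$j" using rho_pos g_nonneg by (simp add: less_imp_le)
  then have "relaxed r $ j / rho$j \<ge> 0"
    unfolding relaxed_ratio using assms by (smt (verit) mult_nonneg_nonneg)
  then show ?thesis using J by auto
qed

lemma has_real_derivative_relaxed_ratio:
  "((\<lambda>r. relaxed r $ j / rho$j) has_real_derivative (g$j - rho$j) / rho$j) (at r)"
  unfolding relaxed_def by (auto intro!: derivative_eq_intros)

lemma has_real_derivative_entropy:
  assumes "\<forall>j. relaxed r $ j / rho$j \<in> J"
  shows "(entropy has_real_derivative entropy_slope r) (at r)"
proof -
  have "(entropy has_real_derivative
      (\<Sum>j\<in>UNIV. deriv psi (relaxed r $ j / rho$j) * ((g$j - rho$j) / rho$j) * rho$j)) (at r)"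
    unfolding entropy_def rel_entropy_def
    by (intro DERIV_sum DERIV_cmult_right DERIV_chain2[OF _ has_real_derivative_relaxed_ratio])
      (use psi_d1 assms in auto)
  then show ?thesis
    by (simp add: entropy_slope_def)
qed

lemma has_real_derivative_entropy_slope:
  assumes "\<forall>j. relaxed r $ j / rho$j \<in> J"
  shows "(entropy_slope has_real_derivative entropy_curvature r) (at r)"
proof -
  have "(entropy_slope has_real_derivative
      (\<Sum>j\<in>UNIV. deriv (deriv psi) (relaxed r $ j / rho$j) * ((g$j - rho$j) / rho$j) * (g$j - rho$j))) (at r)"
    unfolding entropy_slope_def
    by (intro DERIV_sum DERIV_cmult_right DERIV_chain2[OF _ has_real_derivative_relaxed_ratio])
      (use psi_d2 assms in auto)
  then show ?thesis
    by (simp add: entropy_curvature_def power2_eq_square mult.assoc)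
qed

lemma entropy_zero: "entropy 0 = 0"
  by (simp add: entropy_def rel_entropy_def relaxed_def psi_one)

lemma continuous_on_entropy: "continuous_on {0..1} entropy"
  unfolding entropy_def rel_entropy_def
proof (intro continuous_on_sum continuous_on_mult_right continuous_on_compose2[OF psi_cont])
  show "continuous_on {0..1} (\<lambda>r. relaxed r $ j / rho$j)" for j
    unfolding relaxed_def by (intro continuous_intros) simp
  show "(\<lambda>r. relaxed r $ j / rho$j) ` {0..1} \<subseteq> closure J" for j
    using relaxed_ratio_in_closure by auto
qed

lemma fisher_info_relaxed: "fisher_info psi lam (relaxed r) rho = 2 * lam * (r * entropy_slope r)"
  unfolding fisher_info_def entropy_slope_def sum_distrib_left
  by (rule sum.cong) (simp_all add: relaxed_def)

lemma curvature_bound_relaxed: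
  assumes rho_sum: "(\<Sum>j\<in>UNIV. rho$j) = 1"
    and g_sum: "(\<Sum>j\<in>UNIV. g$j) = 1"
    and cond: "\<forall>u::real^'n. (\<forall>j. 0 \<le> u$j \<and> u$j \<le> 1 \<and> u$j / rho$j \<in> J) \<and> (\<Sum>j\<in>UNIV. u$j) = 1 \<longrightarrow>
        (\<Sum>j\<in>UNIV. deriv (deriv psi) (u$j / rho$j) * (1 / rho$j) * (rho$j - u$j)^2)
          \<ge> c * (\<Sum>j\<in>UNIV. deriv psi (u$j / rho$j) * (u$j - rho$j))"
    and r: "0 < r" "r < 1"
  shows "c * entropy_slope r \<le> r * entropy_curvature r"
proof -
  \<comment> \<open>relaxed r - rho = r (g - rho), so the hypothesis at u = relaxed r is
    r^2 entropy_curvature r \<ge> c r entropy_slope r.\<close>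
  let ?u = "relaxed r"
  have "?u $ j = (1 - r) * rho$j + r * g$j" for j
    by (simp add: relaxed_def algebra_simps)
  then have u_nonneg: "0 \<le> ?u $ j" for j
    using r rho_pos g_nonneg by (simp add: less_imp_le)
  have u_sum: "(\<Sum>j\<in>UNIV. ?u $ j) = 1"
    by (simp add: relaxed_def sum.distrib sum_subtractf sum_distrib_left[symmetric] rho_sum g_sum)
  have "?u $ j \<le> 1" for j
    using member_le_sum[of j UNIV "\<lambda>j. ?u $ j"] u_nonneg u_sum by auto
  then have "(\<Sum>j\<in>UNIV. deriv (deriv psi) (?u$j / rho$j) * (1 / rho$j) * (rho$j - ?u$j)^2)
      \<ge> c * (\<Sum>j\<in>UNIV. deriv psi (?u$j / rho$j) * (?u$j - rho$j))"
    using cond u_nonneg u_sum relaxed_ratio_in_J r by simp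
  moreover have "(\<Sum>j\<in>UNIV. deriv (deriv psi) (?u$j / rho$j) * (1 / rho$j) * (rho$j - ?u$j)^2)
      = r * (r * entropy_curvature r)"
    unfolding entropy_curvature_def sum_distrib_left
    by (rule sum.cong) (simp_all add: relaxed_def power2_eq_square field_simps)
  moreover have "(\<Sum>j\<in>UNIV. deriv psi (?u$j / rho$j) * (?u$j - rho$j)) = r * entropy_slope r"
    unfolding entropy_slope_def sum_distrib_left
    by (rule sum.cong) (simp_all add: relaxed_def)
  ultimately have "r * (c * entropy_slope r) \<le> r * (r * entropy_curvature r)"
    by (simp add: mult.left_commute)
  then show ?thesis
    using r by simp
qed

context
  fixes a :: real
  assumes curvature_bound: "\<And>r. 0 < r \<Longrightarrow> r < 1 \<Longrightarrow> a * entropy_slope r \<le> r * entropy_curvature r"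
begin

text \<open>r * entropy_slope r - (1 + a) * entropy r vanishes at 0 and is nondecreasing.\<close>
lemma entropy_le_slope:
  assumes "0 \<le> s" "s < 1"
  shows "(1 + a) * entropy s \<le> s * entropy_slope s"
proof -
  let ?H = "\<lambda>r. r * entropy_slope r - (1 + a) * entropy r"
  have H_deriv: "(?H has_real_derivative (r * entropy_curvature r - a * entropy_slope r)) (at r)"
    if "0 \<le> r" "r < 1" for r
  proof -
    have "\<forall>j. relaxed r $ j / rho$j \<in> J" using relaxed_ratio_in_J that by blast
    then show ?thesis
      by (auto intro!: derivative_eq_intros has_real_derivative_entropy has_real_derivative_entropy_slope
          simp: algebra_simps)
  qed
  have "?H 0 \<le> ?H s"
  proof (rule DERIV_nonneg_imp_increasing_open[OF \<open>0 \<le> s\<close>])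
    show "\<exists>y. (?H has_real_derivative y) (at r) \<and> 0 \<le> y" if "0 < r" "r < s" for r
    proof (intro exI conjI)
      show "(?H has_real_derivative (r * entropy_curvature r - a * entropy_slope r)) (at r)"
        using that assms by (intro H_deriv) auto
      show "0 \<le> r * entropy_curvature r - a * entropy_slope r"
        using curvature_bound[of r] that assms by simp
    qed
    show "continuous_on {0..s} ?H"
      using assms by (intro continuous_at_imp_continuous_on ballI DERIV_isCont[OF H_deriv]) auto
  qed
  then show ?thesis by (simp add: entropy_zero)
qed

lemma rel_entropy_relaxed_le:
  assumes "0 < s" "s \<le> 1"
  shows "rel_entropy psi (relaxed s) rho \<le> s powr (1 + a) * rel_entropy psi g rho"
proof -
  have "entropy s \<le> s powr (1 + a) * entropy 1"
  proof (rule powr_growth_bound[OF assms])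
    show "continuous_on {s..1} entropy"
      by (rule continuous_on_subset[OF continuous_on_entropy]) (use assms in auto)
    show "(entropy has_real_derivative entropy_slope r) (at r)" if "s < r" "r < 1" for r
      using that assms relaxed_ratio_in_J by (intro has_real_derivative_entropy) auto
    show "(1 + a) * entropy r \<le> r * entropy_slope r" if "s < r" "r < 1" for r
      using that assms by (intro entropy_le_slope) auto
  qed
  then show ?thesis
    by (simp add: entropy_def relaxed_one)
qed

lemma slope_relaxed_le:
  assumes ratio_J: "\<forall>j. g$j / rho$j \<in> J" and "0 < s" "s \<le> 1"
  shows "s * entropy_slope s \<le> s powr (1 + a) * entropy_slope 1"
proof -
  have ratio_in_J: "\<forall>j. relaxed r $ j / rho$j \<in> J" if "0 \<le> r" "r \<le> 1" for r
    using ratio_J relaxed_ratio_in_J that by (cases "r = 1") (auto simp: relaxed_def)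
  have deriv: "((\<lambda>r. r * entropy_slope r) has_real_derivative
      entropy_slope r + r * entropy_curvature r) (at r)" if "0 \<le> r" "r \<le> 1" for r
    using ratio_in_J[OF that]
    by (auto intro!: derivative_eq_intros has_real_derivative_entropy_slope)
  have "(\<lambda>r. r * entropy_slope r) s \<le> s powr (1 + a) * (\<lambda>r. r * entropy_slope r) 1"
  proof (rule powr_growth_bound[OF assms(2,3)])
    show "continuous_on {s..1} (\<lambda>r. r * entropy_slope r)"
      using assms by (intro continuous_at_imp_continuous_on ballI DERIV_isCont[OF deriv]) auto
    show "((\<lambda>r. r * entropy_slope r) has_real_derivative
        entropy_slope r + r * entropy_curvature r) (at r)" if "s < r" "r < 1" for r
      using deriv that assms by auto
    show "(1 + a) * (r * entropy_slope r) \<le> r * (entropy_slope r + r * entropy_curvature r)"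
      if "s < r" "r < 1" for r
      using curvature_bound[of r] that assms by (simp add: algebra_simps mult_left_mono)
  qed
  then show ?thesis by simp
qed

lemma fisher_info_relaxed_le:
  assumes "\<forall>j. g$j / rho$j \<in> J" "0 < s" "s \<le> 1" "0 \<le> lam"
  shows "fisher_info psi lam (relaxed s) rho \<le> s powr (1 + a) * fisher_info psi lam g rho"
proof -
  have "2 * lam * (s * entropy_slope s) \<le> 2 * lam * (s powr (1 + a) * entropy_slope 1)"
    using slope_relaxed_le[OF assms(1-3)] assms(4) by (simp add: mult_left_mono)
  then show ?thesis
    using fisher_info_relaxed[of lam 1] by (simp add: fisher_info_relaxed relaxed_one mult.left_commute)
qed

end

end

theorem theorem4:
  fixes rho :: "real^'n" and lam mu :: real and J :: "real set"
    and psi :: "real \<Rightarrow> real" and fI :: "real^'n" and f :: "real \<Rightarrow> real^'n"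
  assumes n2: "CARD('n) \<ge> 2"
    and lam: "lam > 0"
    and rho_range: "\<forall>j. 0 < rho$j \<and> rho$j < 1"
    and rho_sum: "(\<Sum>j\<in>UNIV. rho$j) = 1"
    and J: "J = {0<..} \<or> J = UNIV"
    and psi_cont: "continuous_on (closure J) psi"
    and psi_d1: "\<forall>x\<in>J. (psi has_real_derivative deriv psi x) (at x)"
    and psi_d2: "\<forall>x\<in>J. (deriv psi has_real_derivative deriv (deriv psi) x) (at x)"
    and psi_C2: "continuous_on J (deriv (deriv psi))"
    and psi_one: "psi 1 = 0"
    and psi_nonneg: "\<forall>x\<in>J. psi x \<ge> 0"
    and psi_convex: "\<forall>x\<in>J. deriv (deriv psi) x \<ge> 0"
    and mu: "mu > 0"
    and cond: "\<forall>u::real^'n. (\<forall>j. 0 \<le> u$j \<and> u$j \<le> 1 \<and> u$j / rho$j \<in> J) \<and> (\<Sum>j\<in>UNIV. u$j) = 1 \<longrightarrow>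
        (\<Sum>j\<in>UNIV. deriv (deriv psi) (u$j / rho$j) * (1 / rho$j) * (rho$j - u$j)^2)
          \<ge> mu / (2 * lam) * (\<Sum>j\<in>UNIV. deriv psi (u$j / rho$j) * (u$j - rho$j))"
    and fI_nonneg: "\<forall>j. fI$j \<ge> 0"
    and fI_sum: "(\<Sum>j\<in>UNIV. fI$j) = 1"
    and f_init: "f 0 = fI"
    and f_ode: "\<forall>t\<ge>0. (f has_vector_derivative ((2 * lam) *\<^sub>R (matA rho *v f t))) (at t within {0..})"
  shows "(\<forall>t\<ge>0. rel_entropy psi (f t) rho \<le> exp (-(2 * lam + mu) * t) * rel_entropy psi fI rho)
       \<and> ((\<forall>j. fI$j / rho$j \<in> J) \<longrightarrow>
          (\<forall>t\<ge>0. fisher_info psi lam (f t) rho \<le> exp (-(2 * lam + mu) * t) * fisher_info psi lam fI rho))"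
proof -
  interpret relaxation_path psi J rho fI
    using J psi_cont psi_d1 psi_d2 psi_one rho_range fI_nonneg by unfold_locales auto
  define a where "a = mu / (2 * lam)"
  have curvature: "a * entropy_slope r \<le> r * entropy_curvature r" if "0 < r" "r < 1" for r
    unfolding a_def using rho_sum fI_sum cond that by (rule curvature_bound_relaxed)
  have f_relaxed: "f t = relaxed (exp (-(2 * lam) * t))" if "t \<ge> 0" for t
    using matA_ode_solution[OF rho_sum _ f_ode that] f_init fI_sum by (simp add: relaxed_def)
  have rate: "exp (-(2 * lam + mu) * t) = exp (-(2 * lam) * t) powr (1 + a)" for t
    using lam by (simp add: powr_def a_def field_simps)
  have "rel_entropy psi (f t) rho \<le> exp (-(2 * lam + mu) * t) * rel_entropy psi fI rho"
    if "t \<ge> 0" for t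
    unfolding rate f_relaxed[OF that] using that lam
    by (intro rel_entropy_relaxed_le curvature) auto
  moreover have "fisher_info psi lam (f t) rho \<le> exp (-(2 * lam + mu) * t) * fisher_info psi lam fI rho"
    if "\<forall>j. fI$j / rho$j \<in> J" "t \<ge> 0" for t
    unfolding rate f_relaxed[OF that(2)] using that lam
    by (intro fisher_info_relaxed_le curvature) auto
  ultimately show ?thesis
    by blast
qed

end
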